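(* Color each positive integer $\ell$ as follows: write $\ell=\sum_i b_i 11^i$ with digits $0\le b_i\le 10$, let $j$ be the smallest index with $b_j\neq 0$, and color $\ell$ white if $b_j\in\{1,3,4,5,9\}$ and black if $b_j\in\{2,6,7,8,10\}$. Then there is a constant $C$ such that for every $n$, the number $N$ of monochromatic $4$-APs in $[n]$ under this coloring satisfies $\left|N-\frac{1}{72}n^2\right|\le Cn$.
   Context: A $4$-AP in $[n]=\{1,\ldots,n\}$ is a sequence $a,a+d,a+2d,a+3d$ of elements of $[n]$ with integer $d\ge 1$; it is monochromatic if all four terms have the same color. *)

theory Defs
  imports Complex_Main
begin

function lowest_digit11 :: "nat \<Rightarrow> nat" where
  "lowest_digit11 l = (if l = 0 then 0
     else if l mod 11 \<noteq> 0 then l mod 11 else lowest_digit11 (l div 11))"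
  by auto
termination by (relation "measure id") auto

definition white :: "nat \<Rightarrow> bool" where
  "white l \<longleftrightarrow> lowest_digit11 l \<in> {1,3,4,5,9}"

definition mono_4AP :: "nat \<Rightarrow> (nat \<times> nat) set" where
  "mono_4AP n = {(a, d). 1 \<le> a \<and> 1 \<le> d \<and> a + 3 * d \<le> n \<and>
      white (a + d) = white a \<and> white (a + 2 * d) = white a \<and> white (a + 3 * d) = white a}"

end

theory Submission
  imports Defs
begin

(* Since 1, 3, 4, 5, 9 are the nonzero squares modulo 11, the colour of l is the quadratic
   character of its lowest nonzero base-11 digit, and white (11 * l) = white l.  A 4-AP whose
   difference d is prime to 11 runs through four distinct residues modulo 11 and is never
   monochromatic (a finite check).  If 11 divides d, the 4-AP is monochromatic when 11 does not
   divide a, and when 11 divides a it is 11 times a monochromatic 4-AP in [n div 11].  Hence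
   M(n) = M(n div 11) + T(n), where T(n) counts the 4-APs with 11 dividing d but not a; direct
   counting gives T(n) = (10/726) n^2 + O(n), and unrolling the recurrence yields
   M(n) = (10/726) (121/120) n^2 + O(n) = n^2/72 + O(n). *)

lemma abs_square_shift_le:
  fixes x t :: real
  assumes "0 \<le> x" "0 \<le> t" "t \<le> 1"
  shows "\<bar>(x + t)\<^sup>2 - x\<^sup>2\<bar> \<le> 2 * x + 1"
proof -
  have "x * t \<le> x" "t\<^sup>2 \<le> 1"
    using assms by (simp_all add: mult_left_le power_le_one)
  then show ?thesis
    using assms by (simp add: power2_eq_square algebra_simps)
qed

(* beta is the solution of beta = alpha + beta / b^2, which makes the quadratic terms of the
   recurrence cancel. *)
lemma digit_recurrence_quadratic_estimate:
  fixes f g :: "nat \<Rightarrow> real" and b :: nat and \<alpha> B :: real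
  defines "\<beta> \<equiv> \<alpha> * (real b)\<^sup>2 / ((real b)\<^sup>2 - 1)"
  assumes b: "2 \<le> b" and f0: "f 0 = 0"
    and rec: "\<And>n. 0 < n \<Longrightarrow> f n = f (n div b) + g n"
    and g: "\<And>n. \<bar>g n - \<alpha> * (real n)\<^sup>2\<bar> \<le> B * real n"
  shows "\<bar>f n - \<beta> * (real n)\<^sup>2\<bar> \<le> (2 * B + 4 * \<bar>\<beta>\<bar>) * real n"
proof (induction n rule: less_induct)
  case (less n)
  show ?case
  proof (cases "n = 0")
    case True
    then show ?thesis using f0 by simp
  next
    case False
    define m where "m = n div b"
    define u where "u = n mod b"
    have "m < n" using False b unfolding m_def by simp
    with less have IH: "\<bar>f m - \<beta> * (real m)\<^sup>2\<bar> \<le> (2 * B + 4 * \<bar>\<beta>\<bar>) * real m" by blast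
    have "(2::real)\<^sup>2 \<le> (real b)\<^sup>2" using b by (intro power_mono) auto
    then have b_pos: "(real b)\<^sup>2 - 1 > 0" by simp
    have "B \<ge> 0" using g[of 1] by simp
    have n_eq: "real n = real b * real m + real u"
      unfolding m_def u_def by (metis div_mult_mod_eq mult.commute of_nat_add of_nat_mult)
    have "real u \<le> real b" unfolding u_def using b by simp
    have "\<beta> * ((real b)\<^sup>2 - 1) = \<alpha> * (real b)\<^sup>2"
      using b_pos unfolding \<beta>_def by simp
    moreover have "real b \<noteq> 0" using b by simp
    ultimately have \<alpha>_eq: "\<alpha> = \<beta> - \<beta> / (real b)\<^sup>2"
      by (simp add: field_simps)
    have "\<alpha> * (real n)\<^sup>2 + \<beta> * (real m)\<^sup>2 - \<beta> * (real n)\<^sup>2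
        = - \<beta> * ((real m + real u / real b)\<^sup>2 - (real m)\<^sup>2)"
      using \<open>real b \<noteq> 0\<close> unfolding n_eq \<alpha>_eq by (simp add: field_simps power2_eq_square)
    moreover have "\<bar>(real m + real u / real b)\<^sup>2 - (real m)\<^sup>2\<bar> \<le> 2 * real m + 1"
      using \<open>real u \<le> real b\<close> b by (intro abs_square_shift_le) auto
    ultimately have shift_bound:
      "\<bar>\<alpha> * (real n)\<^sup>2 + \<beta> * (real m)\<^sup>2 - \<beta> * (real n)\<^sup>2\<bar> \<le> \<bar>\<beta>\<bar> * (2 * real m + 1)"
      by (simp add: abs_mult mult_left_mono)
    have "f n - \<beta> * (real n)\<^sup>2 = (f m - \<beta> * (real m)\<^sup>2) + (g n - \<alpha> * (real n)\<^sup>2)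
        + (\<alpha> * (real n)\<^sup>2 + \<beta> * (real m)\<^sup>2 - \<beta> * (real n)\<^sup>2)"
      using rec[of n] False unfolding m_def by simp
    then have "\<bar>f n - \<beta> * (real n)\<^sup>2\<bar>
        \<le> (2 * B + 4 * \<bar>\<beta>\<bar>) * real m + B * real n + \<bar>\<beta>\<bar> * (2 * real m + 1)"
      using IH g[of n] shift_bound by linarith
    moreover have "2 * m \<le> n"
      using b times_div_less_eq_dividend[of b n] unfolding m_def by (meson le_trans mult_le_mono1)
    then have "B * (2 * real m) \<le> B * real n" "\<bar>\<beta>\<bar> * (2 * real m) \<le> \<bar>\<beta>\<bar> * real n"
      using \<open>B \<ge> 0\<close> by (simp_all add: mult_left_mono)
    moreover have "\<bar>\<beta>\<bar> \<le> \<bar>\<beta>\<bar> * real n"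
      using False mult_left_mono[of 1 "real n" "\<bar>\<beta>\<bar>"] by simp
    ultimately show ?thesis by (simp add: ring_distribs)
  qed
qed

(* The defining equation of lowest_digit11 loops under the simplifier. *)
declare lowest_digit11.simps [simp del]

lemma lowest_digit11_mult_11 [simp]: "lowest_digit11 (11 * x) = lowest_digit11 x"
  by (cases "x = 0") (simp_all add: lowest_digit11.simps[of "11 * x"])

lemma white_mult_11 [simp]: "white (11 * x) = white x"
  by (simp add: white_def)

lemma white_iff_mod_11: "\<not> 11 dvd x \<Longrightarrow> white x \<longleftrightarrow> x mod 11 \<in> {1, 3, 4, 5, 9}"
  unfolding white_def dvd_eq_mod_eq_0 by (subst lowest_digit11.simps) auto

lemma quadratic_residues_11_progression:
  fixes r s :: nat
  assumes "r < 11" "0 < s" "s < 11"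
  shows "\<exists>i\<in>{0,1,2,3}. \<exists>j\<in>{0,1,2,3}. (r + i * s) mod 11 \<noteq> 0 \<and> (r + j * s) mod 11 \<noteq> 0 \<and>
           ((r + i * s) mod 11 \<in> {1, 3, 4, 5, 9}) \<noteq> ((r + j * s) mod 11 \<in> {1, 3, 4, 5, 9})"
proof -
  have "r = 0 \<or> r = 1 \<or> r = 2 \<or> r = 3 \<or> r = 4 \<or> r = 5 \<or> r = 6 \<or> r = 7 \<or> r = 8 \<or> r = 9 \<or> r = 10"
       "s = 1 \<or> s = 2 \<or> s = 3 \<or> s = 4 \<or> s = 5 \<or> s = 6 \<or> s = 7 \<or> s = 8 \<or> s = 9 \<or> s = 10"
    using assms by arith+
  then show ?thesis by (elim disjE) simp_all
qed

lemma white_iff_progression_mod_11: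
  assumes "(a mod 11 + i * (d mod 11)) mod 11 \<noteq> 0"
  shows "white (a + i * d) \<longleftrightarrow> (a mod 11 + i * (d mod 11)) mod 11 \<in> {1, 3, 4, 5, 9}"
proof -
  have eq: "(a + i * d) mod 11 = (a mod 11 + i * (d mod 11)) mod 11"
    by (rule mod_add_cong) (simp_all add: mod_mult_right_eq)
  with assms have "\<not> 11 dvd (a + i * d)"
    by (simp only: dvd_eq_mod_eq_0 not_False_eq_True)
  from white_iff_mod_11[OF this] show ?thesis
    by (simp only: eq)
qed

lemma not_mono_4AP_if_not_dvd:
  assumes "\<not> 11 dvd d"
  shows "\<not> (white (a + d) = white a \<and> white (a + 2 * d) = white a \<and> white (a + 3 * d) = white a)"
proof
  assume "white (a + d) = white a \<and> white (a + 2 * d) = white a \<and> white (a + 3 * d) = white a"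
  then have mono: "white (a + i * d) = white a" if "i \<in> {0,1,2,3}" for i
    using that by auto
  obtain i j where ij: "i \<in> {0,1,2,3}" "j \<in> {0,1,2,3}"
    and nonzero: "(a mod 11 + i * (d mod 11)) mod 11 \<noteq> 0" "(a mod 11 + j * (d mod 11)) mod 11 \<noteq> 0"
    and differ: "((a mod 11 + i * (d mod 11)) mod 11 \<in> {1, 3, 4, 5, 9})
       \<noteq> ((a mod 11 + j * (d mod 11)) mod 11 \<in> {1, 3, 4, 5, 9})"
  proof -
    have "a mod 11 < 11" "0 < d mod 11" "d mod 11 < 11"
      using assms by (simp_all add: dvd_eq_mod_eq_0)
    from quadratic_residues_11_progression[OF this] show ?thesis
      using that by (elim bexE conjE)
  qed
  have "white (a + i * d) \<noteq> white (a + j * d)"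
    unfolding white_iff_progression_mod_11[OF nonzero(1)] white_iff_progression_mod_11[OF nonzero(2)]
    by (rule differ)
  then show False using mono[OF ij(1)] mono[OF ij(2)] by simp
qed

lemma white_progression_if_dvd:
  assumes "11 dvd d" "\<not> 11 dvd a"
  shows "white (a + i * d) = white a"
proof -
  have "(i * d) mod 11 = 0" using assms(1) by simp
  then have "(a + i * d) mod 11 = a mod 11" by (metis add.right_neutral mod_add_right_eq)
  with assms show ?thesis
    by (simp add: white_iff_mod_11 dvd_eq_mod_eq_0)
qed

definition unscaled_4AP :: "nat \<Rightarrow> (nat \<times> nat) set" where
  "unscaled_4AP n = {(a, d). 1 \<le> a \<and> 1 \<le> d \<and> a + 3 * d \<le> n \<and> 11 dvd d \<and> \<not> 11 dvd a}"

lemma finite_mono_4AP: "finite (mono_4AP n)"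
  by (rule finite_subset[of _ "{0..n} \<times> {0..n}"]) (auto simp: mono_4AP_def)

lemma finite_unscaled_4AP: "finite (unscaled_4AP n)"
  by (rule finite_subset[of _ "{0..n} \<times> {0..n}"]) (auto simp: unscaled_4AP_def)

lemma scaled_in_mono_4AP_iff: "(11 * a, 11 * d) \<in> mono_4AP n \<longleftrightarrow> (a, d) \<in> mono_4AP (n div 11)"
proof -
  have white_scaled: "white (11 * a + i * (11 * d)) = white (a + i * d)" for i
  proof -
    have "11 * a + i * (11 * d) = 11 * (a + i * d)" by simp
    then show ?thesis by (simp only: white_mult_11)
  qed
  have "11 * a + 3 * (11 * d) \<le> n \<longleftrightarrow> a + 3 * d \<le> n div 11"
    by (simp add: less_eq_div_iff_mult_less_eq mult.commute)
  then show ?thesis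
    using white_scaled[of 1] white_scaled[of 2] white_scaled[of 3] by (simp add: mono_4AP_def)
qed

lemma mono_4AP_decomposition:
  "mono_4AP n = map_prod ((*) 11) ((*) 11) ` mono_4AP (n div 11) \<union> unscaled_4AP n"
proof (intro set_eqI iffI)
  fix p assume "p \<in> mono_4AP n"
  then obtain a d where p: "p = (a, d)" and mono: "(a, d) \<in> mono_4AP n" by (cases p) auto
  have "11 dvd d"
    using mono not_mono_4AP_if_not_dvd[of d a] by (auto simp: mono_4AP_def)
  show "p \<in> map_prod ((*) 11) ((*) 11) ` mono_4AP (n div 11) \<union> unscaled_4AP n"
  proof (cases "11 dvd a")
    case True
    with \<open>11 dvd d\<close> obtain a' d' where ad: "a = 11 * a'" "d = 11 * d'" by (auto elim!: dvdE)
    with mono have "(a', d') \<in> mono_4AP (n div 11)" by (simp add: scaled_in_mono_4AP_iff)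
    with p ad show ?thesis by (auto intro: rev_image_eqI)
  next
    case False
    with mono p \<open>11 dvd d\<close> show ?thesis by (auto simp: mono_4AP_def unscaled_4AP_def)
  qed
next
  fix p assume "p \<in> map_prod ((*) 11) ((*) 11) ` mono_4AP (n div 11) \<union> unscaled_4AP n"
  then show "p \<in> mono_4AP n"
  proof
    assume "p \<in> map_prod ((*) 11) ((*) 11) ` mono_4AP (n div 11)"
    then show ?thesis by (auto simp: scaled_in_mono_4AP_iff)
  next
    assume "p \<in> unscaled_4AP n"
    then obtain a d where "p = (a, d)" "1 \<le> a" "1 \<le> d" "a + 3 * d \<le> n" "11 dvd d" "\<not> 11 dvd a"
      by (auto simp: unscaled_4AP_def)
    with white_progression_if_dvd[of d a 1] white_progression_if_dvd[of d a 2]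
      white_progression_if_dvd[of d a 3]
    show ?thesis by (simp add: mono_4AP_def)
  qed
qed

lemma card_mono_4AP_recurrence:
  "card (mono_4AP n) = card (mono_4AP (n div 11)) + card (unscaled_4AP n)"
proof -
  have "inj_on (map_prod ((*) 11) ((*) 11)) (mono_4AP (n div 11))"
    by (auto simp: inj_on_def)
  moreover have "map_prod ((*) 11) ((*) 11) ` mono_4AP (n div 11) \<inter> unscaled_4AP n = {}"
    by (auto simp: unscaled_4AP_def)
  ultimately show ?thesis
    unfolding mono_4AP_decomposition[of n]
    by (simp add: card_Un_disjoint finite_mono_4AP finite_unscaled_4AP card_image)
qed

lemma card_not_dvd_atLeastAtMost:
  fixes k m :: nat
  assumes "0 < k"
  shows "card {a \<in> {1..m}. \<not> k dvd a} = m - m div k"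
proof -
  have multiples: "{a \<in> {1..m}. k dvd a} = (*) k ` {1..m div k}"
  proof (intro set_eqI iffI)
    fix a assume "a \<in> {a \<in> {1..m}. k dvd a}"
    then obtain c where "a = k * c" "1 \<le> k * c" "k * c \<le> m" by auto
    with assms show "a \<in> (*) k ` {1..m div k}"
      by (auto simp: less_eq_div_iff_mult_less_eq mult.commute intro!: rev_image_eqI)
  qed (use assms in \<open>auto simp: less_eq_div_iff_mult_less_eq mult.commute\<close>)
  have "card {a \<in> {1..m}. \<not> k dvd a} = card ({1..m} - {a \<in> {1..m}. k dvd a})"
    by (rule arg_cong[where f = card]) auto
  also have "\<dots> = card {1..m} - card {a \<in> {1..m}. k dvd a}"
    by (rule card_Diff_subset) auto
  also have "card {a \<in> {1..m}. k dvd a} = m div k"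
    unfolding multiples using assms by (simp add: card_image inj_on_def)
  finally show ?thesis by simp
qed

lemma unscaled_4AP_eq_Sigma:
  "unscaled_4AP n =
    (\<lambda>(e, a). (a, 11 * e)) ` (SIGMA e:{1..(n - 1) div 33}. {a \<in> {1..n - 33 * e}. \<not> 11 dvd a})"
proof (intro set_eqI iffI)
  fix p assume "p \<in> unscaled_4AP n"
  then obtain a e where "p = (a, 11 * e)" "1 \<le> a" "1 \<le> e" "a + 33 * e \<le> n" "\<not> 11 dvd a"
    by (auto simp: unscaled_4AP_def elim!: dvdE)
  then show "p \<in> (\<lambda>(e, a). (a, 11 * e)) `
      (SIGMA e:{1..(n - 1) div 33}. {a \<in> {1..n - 33 * e}. \<not> 11 dvd a})"
    by (auto simp: less_eq_div_iff_mult_less_eq intro!: rev_image_eqI[of "(e, a)"])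
qed (auto simp: unscaled_4AP_def less_eq_div_iff_mult_less_eq)

lemma card_unscaled_4AP:
  "card (unscaled_4AP n) = (\<Sum>e = 1..(n - 1) div 33. (n - 33 * e) - (n - 33 * e) div 11)"
proof -
  have "inj_on (\<lambda>(e, a). (a, 11 * e)) X" for X :: "(nat \<times> nat) set"
    by (auto simp: inj_on_def)
  then have "card (unscaled_4AP n)
      = card (SIGMA e:{1..(n - 1) div 33}. {a \<in> {1..n - 33 * e}. \<not> 11 dvd a})"
    unfolding unscaled_4AP_eq_Sigma by (rule card_image)
  also have "\<dots> = (\<Sum>e = 1..(n - 1) div 33. card {a \<in> {1..n - 33 * e}. \<not> 11 dvd a})"
    by simp
  also have "\<dots> = (\<Sum>e = 1..(n - 1) div 33. (n - 33 * e) - (n - 33 * e) div 11)"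
    by (intro sum.cong refl card_not_dvd_atLeastAtMost) simp
  finally show ?thesis .
qed

lemma real_diff_div_bounds:
  fixes k m :: nat
  assumes "0 < k"
  shows "real m - real m / real k \<le> real (m - m div k)"
    and "real (m - m div k) \<le> real m - real m / real k + 1"
proof -
  have "real m / real k = real (m div k) + real (m mod k) / real k"
    by (rule of_nat_of_nat_div_aux)
  moreover have "real (m mod k) / real k < 1" "0 \<le> real (m mod k) / real k"
    using assms by simp_all
  moreover have "real (m - m div k) = real m - real (m div k)"
    by (simp add: of_nat_diff div_le_dividend)
  ultimately show "real m - real m / real k \<le> real (m - m div k)"
    and "real (m - m div k) \<le> real m - real m / real k + 1"
    by linarith+
qed

lemma card_unscaled_4AP_bounds:
  assumes n: "n = 33 * q + t" and t: "1 \<le> t" "t \<le> 33"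
  shows "10/726 * (real n)\<^sup>2 - 15 * real q - 10/726 * (real t)\<^sup>2 \<le> real (card (unscaled_4AP n))"
    and "real (card (unscaled_4AP n)) \<le> 10/726 * (real n)\<^sup>2 - 14 * real q - 10/726 * (real t)\<^sup>2"
proof -
  have "(n - 1) div 33 = q"
    using n t by simp
  then have card_eq: "real (card (unscaled_4AP n))
      = (\<Sum>e = 1..q. real ((n - 33 * e) - (n - 33 * e) div 11))"
    by (simp add: card_unscaled_4AP)
  define L where "L = (\<Sum>e = 1..q. 10/11 * (real n - 33 * real e))"
  have term_bounds:
    "10/11 * (real n - 33 * real e) \<le> real ((n - 33 * e) - (n - 33 * e) div 11)"
    "real ((n - 33 * e) - (n - 33 * e) div 11) \<le> 10/11 * (real n - 33 * real e) + 1"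
    if "e \<in> {1..q}" for e
  proof -
    have "real (n - 33 * e) = real n - 33 * real e"
      using that n by (simp add: of_nat_diff)
    then show "10/11 * (real n - 33 * real e) \<le> real ((n - 33 * e) - (n - 33 * e) div 11)"
      and "real ((n - 33 * e) - (n - 33 * e) div 11) \<le> 10/11 * (real n - 33 * real e) + 1"
      using real_diff_div_bounds[of 11 "n - 33 * e"] by (simp_all add: field_simps)
  qed
  have "L = (\<Sum>e = 1..q. 10/11 * real n) - (\<Sum>e = 1..q. 30 * real e)"
    unfolding L_def sum_subtractf[symmetric] by (intro sum.cong) (simp_all add: algebra_simps)
  also have "\<dots> = 10/11 * (real q * real n) - 15 * (2 * (\<Sum>e = 1..q. real e))"
    by (simp add: sum_distrib_left[symmetric])
  also have "\<dots> = 10/11 * (real q * real n) - 15 * (real q * (real q + 1))"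
    using double_gauss_sum_from_Suc_0[where 'a = real, of q] by simp
  finally have L_eq: "L = 10/726 * (real n)\<^sup>2 - 15 * real q - 10/726 * (real t)\<^sup>2"
    unfolding n by (simp add: field_simps power2_eq_square)
  have "L \<le> real (card (unscaled_4AP n))"
    unfolding card_eq L_def by (intro sum_mono term_bounds(1))
  then show "10/726 * (real n)\<^sup>2 - 15 * real q - 10/726 * (real t)\<^sup>2 \<le> real (card (unscaled_4AP n))"
    unfolding L_eq .
  have "real (card (unscaled_4AP n)) \<le> (\<Sum>e = 1..q. 10/11 * (real n - 33 * real e) + 1)"
    unfolding card_eq by (intro sum_mono term_bounds(2))
  then show "real (card (unscaled_4AP n)) \<le> 10/726 * (real n)\<^sup>2 - 14 * real q - 10/726 * (real t)\<^sup>2"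
    using L_eq by (simp add: L_def sum.distrib)
qed

lemma card_unscaled_4AP_estimate:
  "\<bar>real (card (unscaled_4AP n)) - 10/726 * (real n)\<^sup>2\<bar> \<le> 20 * real n"
proof (cases "n = 0")
  case True
  then show ?thesis by (simp add: card_unscaled_4AP)
next
  case False
  define q where "q = (n - 1) div 33"
  define t where "t = n - 33 * q"
  have "33 * q \<le> n - 1" "n - 1 < 33 * q + 33"
    using div_mult_mod_eq[of "n - 1" 33] mod_less_divisor[of 33 "n - 1"] unfolding q_def
    by linarith+
  then have n: "n = 33 * q + t" and t: "1 \<le> t" "t \<le> 33"
    using False unfolding t_def by auto
  have "1 \<le> (real t)\<^sup>2" "(real t)\<^sup>2 \<le> 1089" "real n = 33 * real q + real t" "1 \<le> real t"
    using n t power_mono[of "real t" 33 2] by simp_all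
  with card_unscaled_4AP_bounds[OF n t] show ?thesis
    unfolding abs_le_iff by linarith
qed

lemma mono_4AP_0: "mono_4AP 0 = {}"
  by (auto simp: mono_4AP_def)

theorem mainTheorem6:
  shows "\<exists>C::real. \<forall>n::nat.
           \<bar>real (card (mono_4AP n)) - (1/72) * (real n)^2\<bar> \<le> C * real n"
proof -
  let ?\<beta> = "10/726 * (real 11)\<^sup>2 / ((real 11)\<^sup>2 - 1)"
  have "\<bar>real (card (mono_4AP n)) - ?\<beta> * (real n)\<^sup>2\<bar> \<le> (2 * 20 + 4 * \<bar>?\<beta>\<bar>) * real n" for n
  proof (rule digit_recurrence_quadratic_estimate)
    show "real (card (mono_4AP 0)) = 0" by (simp add: mono_4AP_0)
    show "real (card (mono_4AP n)) = real (card (mono_4AP (n div 11))) + real (card (unscaled_4AP n))"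
      for n using card_mono_4AP_recurrence[of n] by simp
  qed (use card_unscaled_4AP_estimate in simp_all)
  moreover have "?\<beta> = 1/72" by simp
  ultimately show ?thesis by metis
qed

end
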